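(* The loss of information about the receiver's orientation due to the nuisance parameters is $$\mathbf G(\boldsymbol\Phi_U,\boldsymbol\Phi_U)=\sum_b\frac{\mathbf a_b\mathbf a_b^T}{\sum_{u,k}\mathrm{SNR}_{bu,k}\omega_{bU,k}}+\frac{\mathbf a_Q\mathbf a_Q^T}{\sum_{q,u,k}\mathrm{SNR}_{qu,k}\omega_{qU,k}},$$ where $\mathbf a_b=\sum_{k,u}\mathrm{SNR}_{bu,k}\,\omega_{bU,k}\nabla_{\boldsymbol\Phi_U}\tau_{bu,k}$ and $\mathbf a_Q=\sum_{q,k,u}\mathrm{SNR}_{qu,k}\,\omega_{qU,k}\nabla_{\boldsymbol\Phi_U}\tau_{qu,k}$.
   Context: System: $N_B$ single-antenna LEO satellites indexed by $b$, $N_Q$ mutually synchronized single-antenna base stations (BSs) indexed by $q$, and a receiver with $N_U$ antennas indexed by $u$; transmissions occur in $N_K$ slots indexed by $k$, spaced $\Delta_t$ apart; $c$ is the speed of light, $f_c$ the carrier frequency. Receiver antenna $u$ is at $\mathbf p_{u,k}=\mathbf p_{U,0}+k\Delta_t\mathbf v_{U,0}+\mathbf Q(\boldsymbol\Phi_U)\tilde{\mathbf s}_u$, with $\mathbf Q(\boldsymbol\Phi_U)$ the 3D rotation matrix for orientation angles $\boldsymbol\Phi_U=[\alpha_U,\psi_U,\varphi_U]^T$ and $\tilde{\mathbf s}_u$ a known offset. LEO $b$ has known nominal position/velocity $\mathbf p_{b,k},\mathbf v_{b,k}$ and unknown constant position offset $\check{\mathbf p}_{b,0}$ and velocity offset $\check{\mathbf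 v}_{b,0}$; BSs are static and known. $\boldsymbol\Delta_{xy,k}$ is the unit vector from entity $x$ to entity $y$ at slot $k$ ($U$: receiver centroid, $u$: antenna $u$). Channel parameters: LEO–receiver link: delays $\tau_{bu,k}$, Dopplers $\nu_{bU,k}=\boldsymbol\Delta_{bU,k}^T(\mathbf v_{b,k}+\check{\mathbf v}_{b,0}-\mathbf v_{U,0})/c$, gains, time offset $\delta_{bU}$, frequency offset $\epsilon_{bU}$; BS–receiver link: delays $\tau_{qu,k}$, Dopplers $\nu_{qU,k}=-\boldsymbol\Delta_{qU,k}^T\mathbf v_{U,0}/c$, gains, common offsets $\delta_{QU},\epsilon_{QU}$; LEO–BS link: delays $\tau_{bq,k}$, Dopplers $\nu_{bq,k}=\boldsymbol\Delta_{bq,k}^T(\mathbf v_{b,k}+\check{\mathbf v}_{b,0})/c$, gains, offsets $\delta_{bQ},\epsilon_{bQ}$. $\mathrm{SNR}_{bu,k},\mathrm{SNR}_{qu,k},\mathrm{SNR}_{bq,k}$ are the received SNRs; $\alpha_{obu,k},\alpha_{oqu,k},\alpha_{obq,k}$ the RMS time durations; $\alpha_{1x,k},\alpha_{2x,k}$ the effective baseband bandwidth and baseband–carrier correlation of transmitter $x$; $f_{obU,k}=f_c(1-\nu_{bU,k})+\epsilon_{bU}$, $f_{oqU,k}=f_c(1-\nu_{qU,k})+\epsilon_{QU}$, $f_{obq,k}=f_c(1-\nu_{bq,k})+\epsilon_{bQ}$, and $\omega_{bU,k}=\alpha_{1b,k}^2+2f_{obU,k}\alpha_{1b,k}\alpha_{2b,k}+f_{obU,k}^2$,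 $\omega_{qU,k}=\alpha_{1q,k}^2+2f_{oqU,k}\alpha_{1q,k}\alpha_{2q,k}+f_{oqU,k}^2$, $\omega_{bq,k}=\alpha_{1q,k}^2+2f_{obq,k}\alpha_{1q,k}\alpha_{2q,k}+f_{obq,k}^2$. Channel-parameter FIM (links mutually independent, contributions additive): each observation (antenna $u$, slot $k$, LEO $b$) contributes $F(\tau_{bu,k},\tau_{bu,k})=F(\delta_{bU},\delta_{bU})=-F(\tau_{bu,k},\delta_{bU})=\mathrm{SNR}_{bu,k}\omega_{bU,k}$, $F(\nu_{bU,k},\nu_{bU,k})=\tfrac12\mathrm{SNR}_{bu,k}f_c^2\alpha_{obu,k}^2$, $F(\nu_{bU,k},\epsilon_{bU})=-\tfrac12\mathrm{SNR}_{bu,k}f_c\alpha_{obu,k}^2$, $F(\epsilon_{bU},\epsilon_{bU})=\tfrac12\mathrm{SNR}_{bu,k}\alpha_{obu,k}^2$, a gain-only diagonal term, and all other entries zero; the BS–receiver (indices $qu,k$, offsets $\delta_{QU},\epsilon_{QU}$, $\omega_{qU,k},\alpha_{oqu,k}$) and LEO–BS (indices $bq,k$, offsets $\delta_{bQ},\epsilon_{bQ}$, $\omega_{bq,k},\alpha_{obq,k}$) links are analogous. Location FIM: $\mathbf J_{\boldsymbol\kappa}=\boldsymbol\Upsilon\mathbf J_{\boldsymbol\eta}\boldsymbol\Upsilon^T$ where $\boldsymbol\Upsilon$ is the Jacobian with nonzero derivatives $\nabla_{\mathbf p_{U,0}}\tau_{bu,k}=\boldsymbol\Delta_{bu,k}/c$,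 $\nabla_{\mathbf p_{U,0}}\tau_{qu,k}=\boldsymbol\Delta_{qu,k}/c$, $\nabla_{\check{\mathbf p}_{b,0}}\tau_{bu,k}=-\boldsymbol\Delta_{bu,k}/c$, $\nabla_{\check{\mathbf p}_{b,0}}\tau_{bq,k}=-\boldsymbol\Delta_{bq,k}/c$, $\nabla_{\mathbf v_{U,0}}\tau_{bu,k}=k\Delta_t\boldsymbol\Delta_{bu,k}/c$, $\nabla_{\mathbf v_{U,0}}\tau_{qu,k}=k\Delta_t\boldsymbol\Delta_{qu,k}/c$, $\nabla_{\check{\mathbf v}_{b,0}}\tau_{bu,k}=-k\Delta_t\boldsymbol\Delta_{bu,k}/c$, $\nabla_{\check{\mathbf v}_{b,0}}\tau_{bq,k}=-k\Delta_t\boldsymbol\Delta_{bq,k}/c$, $\nabla_{\mathbf v_{U,0}}\nu_{bU,k}=-\boldsymbol\Delta_{bU,k}/c$, $\nabla_{\mathbf v_{U,0}}\nu_{qU,k}=-\boldsymbol\Delta_{qU,k}/c$, $\nabla_{\check{\mathbf v}_{b,0}}\nu_{bU,k}=\boldsymbol\Delta_{bU,k}/c$, $\nabla_{\check{\mathbf v}_{b,0}}\nu_{bq,k}=\boldsymbol\Delta_{bq,k}/c$, $\nabla_{\boldsymbol\Phi_U}\tau_{xu,k}=\frac1c[\boldsymbol\Delta_{xu,k}^T\partial_{\alpha_U}\mathbf Q\tilde{\mathbf s}_u,\boldsymbol\Delta_{xu,k}^T\partial_{\psi_U}\mathbf Q\tilde{\mathbf s}_u,\boldsymbol\Delta_{xu,k}^T\partial_{\varphi_U}\mathbf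 Q\tilde{\mathbf s}_u]^T$ ($x\in\{b,q\}$), the Doppler position-gradients $\nabla_{\mathbf p_{U,0}}\nu_{bU,k},\nabla_{\mathbf p_{U,0}}\nu_{qU,k},\nabla_{\check{\mathbf p}_{b,0}}\nu_{bU,k},\nabla_{\check{\mathbf p}_{b,0}}\nu_{bq,k}$, and identity on gains and offsets. $\mathbf F(\mathbf x,\mathbf y)$ denotes the block of $\mathbf J_{\boldsymbol\kappa}$ for sub-vectors $\mathbf x,\mathbf y$. Information loss: split $\boldsymbol\kappa=(\boldsymbol\kappa_1,\boldsymbol\kappa_2)$ with $\boldsymbol\kappa_1=(\mathbf p_{U,0},\mathbf v_{U,0},\boldsymbol\Phi_U,\{\check{\mathbf p}_{b,0}\},\{\check{\mathbf v}_{b,0}\})$ and nuisance $\boldsymbol\kappa_2$ = all channel gains and all time/frequency offsets $\delta_{bU},\epsilon_{bU},\delta_{QU},\epsilon_{QU},\delta_{bQ},\epsilon_{bQ}$. The loss matrix is $\mathbf J^{nu}=\mathbf J_{\boldsymbol\kappa_1,\boldsymbol\kappa_2}\mathbf J_{\boldsymbol\kappa_2}^{-1}\mathbf J_{\boldsymbol\kappa_1,\boldsymbol\kappa_2}^T$ (so the equivalent FIM is $\mathbf J_{\boldsymbol\kappa_1}-\mathbf J^{nu}$), and $\mathbf G(\mathbf x,\mathbf y)$ denotes its block for sub-vectors $\mathbf x,\mathbf y$. *)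

theory Defs
  imports "HOL-Analysis.Analysis"
begin

text \<open>Indices: b = LEO, q = BS, u = receiver antenna, k = slot (all nat, bounded by
  NB, NQ, NU, NK).  Spatial components are indexed by the type 3.\<close>

datatype par =
    PU "3"                 (* p_{U,0} component *)
  | VU "3"                 (* v_{U,0} component *)
  | PhiU "3"               (* Phi_U = [alpha_U, psi_U, varphi_U] component *)
  | Pb nat "3"             (* position offset of LEO b *)
  | Vb nat "3"             (* velocity offset of LEO b *)
  | GbU nat nat nat        (* gain, LEO b -> antenna u, slot k *)
  | GqU nat nat nat        (* gain, BS q -> antenna u, slot k *)
  | Gbq nat nat nat        (* gain, LEO b -> BS q, slot k *)
  | DbU nat | EbU nat
  | DQU | EQU
  | DbQ nat | EbQ nat
  | TbU nat nat nat        (* tau_{bu,k}  (b u k) *)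
  | NbU nat nat            (* nu_{bU,k}   (b k) *)
  | TqU nat nat nat        (* tau_{qu,k}  (q u k) *)
  | NqU nat nat            (* nu_{qU,k}   (q k) *)
  | Tbq nat nat nat        (* tau_{bq,k}  (b q k) *)
  | Nbq nat nat nat        (* nu_{bq,k}   (b q k) *)

record sysdata =
  NB :: nat  NQ :: nat  NU :: nat  NK :: nat
  cl :: real              (* speed of light *)
  fc :: real              (* carrier frequency *)
  dt :: real              (* slot spacing Delta_t *)
  snr_bu :: "nat \<Rightarrow> nat \<Rightarrow> nat \<Rightarrow> real"   (* b u k *)
  snr_qu :: "nat \<Rightarrow> nat \<Rightarrow> nat \<Rightarrow> real"   (* q u k *)
  snr_bq :: "nat \<Rightarrow> nat \<Rightarrow> nat \<Rightarrow> real"   (* b q k *)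
  ao_bu :: "nat \<Rightarrow> nat \<Rightarrow> nat \<Rightarrow> real"    (* RMS durations alpha_{obu,k} *)
  ao_qu :: "nat \<Rightarrow> nat \<Rightarrow> nat \<Rightarrow> real"
  ao_bq :: "nat \<Rightarrow> nat \<Rightarrow> nat \<Rightarrow> real"
  a1b :: "nat \<Rightarrow> nat \<Rightarrow> real"  a2b :: "nat \<Rightarrow> nat \<Rightarrow> real"   (* b k *)
  a1q :: "nat \<Rightarrow> nat \<Rightarrow> real"  a2q :: "nat \<Rightarrow> nat \<Rightarrow> real"   (* q k *)
  fo_bU :: "nat \<Rightarrow> nat \<Rightarrow> real"            (* b k *)
  fo_qU :: "nat \<Rightarrow> nat \<Rightarrow> real"            (* q k *)
  fo_bq :: "nat \<Rightarrow> nat \<Rightarrow> nat \<Rightarrow> real"    (* b q k *)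
  gt_bu :: "nat \<Rightarrow> nat \<Rightarrow> nat \<Rightarrow> real"    (* gain-only diagonal FIM terms *)
  gt_qu :: "nat \<Rightarrow> nat \<Rightarrow> nat \<Rightarrow> real"
  gt_bq :: "nat \<Rightarrow> nat \<Rightarrow> nat \<Rightarrow> real"
  Dl_bu :: "nat \<Rightarrow> nat \<Rightarrow> nat \<Rightarrow> real^3"
  Dl_qu :: "nat \<Rightarrow> nat \<Rightarrow> nat \<Rightarrow> real^3"
  Dl_bq :: "nat \<Rightarrow> nat \<Rightarrow> nat \<Rightarrow> real^3"
  Dl_bU :: "nat \<Rightarrow> nat \<Rightarrow> real^3"
  Dl_qU :: "nat \<Rightarrow> nat \<Rightarrow> real^3"
  dQs :: "3 \<Rightarrow> nat \<Rightarrow> real^3"             (* (d Q / d Phi_i) s_u *)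
  dnu_pU_b :: "nat \<Rightarrow> nat \<Rightarrow> real^3"       (* grad_{p_U} nu_{bU,k} *)
  dnu_pU_q :: "nat \<Rightarrow> nat \<Rightarrow> real^3"       (* grad_{p_U} nu_{qU,k} *)
  dnu_pb_bU :: "nat \<Rightarrow> nat \<Rightarrow> real^3"      (* grad_{pcheck_b} nu_{bU,k} *)
  dnu_pb_bq :: "nat \<Rightarrow> nat \<Rightarrow> nat \<Rightarrow> real^3" (* grad_{pcheck_b} nu_{bq,k} *)

definition omega_bU :: "sysdata \<Rightarrow> nat \<Rightarrow> nat \<Rightarrow> real" where
  "omega_bU S b k = (a1b S b k)\<^sup>2 + 2 * fo_bU S b k * a1b S b k * a2b S b k + (fo_bU S b k)\<^sup>2"

definition omega_qU :: "sysdata \<Rightarrow> nat \<Rightarrow> nat \<Rightarrow> real" where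
  "omega_qU S q k = (a1q S q k)\<^sup>2 + 2 * fo_qU S q k * a1q S q k * a2q S q k + (fo_qU S q k)\<^sup>2"

definition omega_bq :: "sysdata \<Rightarrow> nat \<Rightarrow> nat \<Rightarrow> nat \<Rightarrow> real" where
  "omega_bq S b q k = (a1q S q k)\<^sup>2 + 2 * fo_bq S b q k * a1q S q k * a2q S q k + (fo_bq S b q k)\<^sup>2"

definition gain_set :: "sysdata \<Rightarrow> par set" where
  "gain_set S =
     {GbU b u k | b u k. b < NB S \<and> u < NU S \<and> k < NK S} \<union>
     {GqU q u k | q u k. q < NQ S \<and> u < NU S \<and> k < NK S} \<union>
     {Gbq b q k | b q k. b < NB S \<and> q < NQ S \<and> k < NK S}"

definition offset_set :: "sysdata \<Rightarrow> par set" where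
  "offset_set S = {DbU b | b. b < NB S} \<union> {EbU b | b. b < NB S} \<union> {DQU, EQU} \<union>
     {DbQ b | b. b < NB S} \<union> {EbQ b | b. b < NB S}"

definition kappa1 :: "sysdata \<Rightarrow> par set" where
  "kappa1 S = range PU \<union> range VU \<union> range PhiU \<union>
     {Pb b c | b c. b < NB S} \<union> {Vb b c | b c. b < NB S}"

text \<open>nuisance parameters: all gains and all time/frequency offsets\<close>
definition kappa2 :: "sysdata \<Rightarrow> par set" where
  "kappa2 S = gain_set S \<union> offset_set S"

definition kappa :: "sysdata \<Rightarrow> par set" where
  "kappa S = kappa1 S \<union> kappa2 S"

definition eta :: "sysdata \<Rightarrow> par set" where
  "eta S =
     {TbU b u k | b u k. b < NB S \<and> u < NU S \<and> k < NK S} \<union>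
     {NbU b k | b k. b < NB S \<and> k < NK S} \<union>
     {TqU q u k | q u k. q < NQ S \<and> u < NU S \<and> k < NK S} \<union>
     {NqU q k | q k. q < NQ S \<and> k < NK S} \<union>
     {Tbq b q k | b q k. b < NB S \<and> q < NQ S \<and> k < NK S} \<union>
     {Nbq b q k | b q k. b < NB S \<and> q < NQ S \<and> k < NK S} \<union>
     gain_set S \<union> offset_set S"

text \<open>Contribution of one observation with delay t, Doppler n, time offset d,
  frequency offset e, gain g, SNR snr, omega om, RMS duration ao, gain term gt.\<close>
definition obs :: "par \<Rightarrow> par \<Rightarrow> par \<Rightarrow> par \<Rightarrow> par \<Rightarrow> real \<Rightarrow> real \<Rightarrow> real \<Rightarrow> real \<Rightarrow> real
                    \<Rightarrow> par \<Rightarrow> par \<Rightarrow> real" where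
  "obs t n d e g snr om ao gt f x y =
    (if (x = t \<and> y = t) \<or> (x = d \<and> y = d) then snr * om
     else if (x = t \<and> y = d) \<or> (x = d \<and> y = t) then - (snr * om)
     else if x = n \<and> y = n then snr * f\<^sup>2 * ao\<^sup>2 / 2
     else if (x = n \<and> y = e) \<or> (x = e \<and> y = n) then - (snr * f * ao\<^sup>2 / 2)
     else if x = e \<and> y = e then snr * ao\<^sup>2 / 2
     else if x = g \<and> y = g then gt
     else 0)"

definition Jeta :: "sysdata \<Rightarrow> par \<Rightarrow> par \<Rightarrow> real" where
  "Jeta S x y =
     (\<Sum>b<NB S. \<Sum>u<NU S. \<Sum>k<NK S.
        obs (TbU b u k) (NbU b k) (DbU b) (EbU b) (GbU b u k)
            (snr_bu S b u k) (omega_bU S b k) (ao_bu S b u k) (gt_bu S b u k) (fc S) x y)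
   + (\<Sum>q<NQ S. \<Sum>u<NU S. \<Sum>k<NK S.
        obs (TqU q u k) (NqU q k) DQU EQU (GqU q u k)
            (snr_qu S q u k) (omega_qU S q k) (ao_qu S q u k) (gt_qu S q u k) (fc S) x y)
   + (\<Sum>b<NB S. \<Sum>q<NQ S. \<Sum>k<NK S.
        obs (Tbq b q k) (Nbq b q k) (DbQ b) (EbQ b) (Gbq b q k)
            (snr_bq S b q k) (omega_bq S b q k) (ao_bq S b q k) (gt_bq S b q k) (fc S) x y)"

definition gradPhi_tau_bu :: "sysdata \<Rightarrow> nat \<Rightarrow> nat \<Rightarrow> nat \<Rightarrow> real^3" where
  "gradPhi_tau_bu S b u k = (\<chi> i. (Dl_bu S b u k \<bullet> dQs S i u) / cl S)"

definition gradPhi_tau_qu :: "sysdata \<Rightarrow> nat \<Rightarrow> nat \<Rightarrow> nat \<Rightarrow> real^3" where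
  "gradPhi_tau_qu S q u k = (\<chi> i. (Dl_qu S q u k \<bullet> dQs S i u) / cl S)"

definition Ups :: "sysdata \<Rightarrow> par \<Rightarrow> par \<Rightarrow> real" where
  "Ups S x e = (case x of
     PU c \<Rightarrow> (case e of
         TbU b u k \<Rightarrow> Dl_bu S b u k $ c / cl S
       | TqU q u k \<Rightarrow> Dl_qu S q u k $ c / cl S
       | NbU b k \<Rightarrow> dnu_pU_b S b k $ c
       | NqU q k \<Rightarrow> dnu_pU_q S q k $ c
       | _ \<Rightarrow> 0)
   | Pb b' c \<Rightarrow> (case e of
         TbU b u k \<Rightarrow> (if b = b' then - (Dl_bu S b u k $ c) / cl S else 0)
       | Tbq b q k \<Rightarrow> (if b = b' then - (Dl_bq S b q k $ c) / cl S else 0)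
       | NbU b k \<Rightarrow> (if b = b' then dnu_pb_bU S b k $ c else 0)
       | Nbq b q k \<Rightarrow> (if b = b' then dnu_pb_bq S b q k $ c else 0)
       | _ \<Rightarrow> 0)
   | VU c \<Rightarrow> (case e of
         TbU b u k \<Rightarrow> real k * dt S * Dl_bu S b u k $ c / cl S
       | TqU q u k \<Rightarrow> real k * dt S * Dl_qu S q u k $ c / cl S
       | NbU b k \<Rightarrow> - (Dl_bU S b k $ c) / cl S
       | NqU q k \<Rightarrow> - (Dl_qU S q k $ c) / cl S
       | _ \<Rightarrow> 0)
   | Vb b' c \<Rightarrow> (case e of
         TbU b u k \<Rightarrow> (if b = b' then - (real k * dt S * Dl_bu S b u k $ c) / cl S else 0)
       | Tbq b q k \<Rightarrow> (if b = b' then - (real k * dt S * Dl_bq S b q k $ c) / cl S else 0)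
       | NbU b k \<Rightarrow> (if b = b' then Dl_bU S b k $ c / cl S else 0)
       | Nbq b q k \<Rightarrow> (if b = b' then Dl_bq S b q k $ c / cl S else 0)
       | _ \<Rightarrow> 0)
   | PhiU i \<Rightarrow> (case e of
         TbU b u k \<Rightarrow> gradPhi_tau_bu S b u k $ i
       | TqU q u k \<Rightarrow> gradPhi_tau_qu S q u k $ i
       | _ \<Rightarrow> 0)
   | _ \<Rightarrow> (if x = e then 1 else 0))"

definition Jkappa :: "sysdata \<Rightarrow> par \<Rightarrow> par \<Rightarrow> real" where
  "Jkappa S x y = (\<Sum>e\<in>eta S. \<Sum>e'\<in>eta S. Ups S x e * Jeta S e e' * Ups S y e')"

definition inv_on :: "par set \<Rightarrow> (par \<Rightarrow> par \<Rightarrow> real) \<Rightarrow> par \<Rightarrow> par \<Rightarrow> real" where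
  "inv_on I A = (THE M.
      (\<forall>i\<in>I. \<forall>j\<in>I. (\<Sum>l\<in>I. A i l * M l j) = (if i = j then 1 else 0)) \<and>
      (\<forall>i\<in>I. \<forall>j\<in>I. (\<Sum>l\<in>I. M i l * A l j) = (if i = j then 1 else 0)) \<and>
      (\<forall>i j. i \<notin> I \<or> j \<notin> I \<longrightarrow> M i j = 0))"

text \<open>Loss matrix J^nu = J_{k1,k2} J_{k2}^{-1} J_{k1,k2}^T; G(x,y) is its (x,y) entry.\<close>
definition Jnu :: "sysdata \<Rightarrow> par \<Rightarrow> par \<Rightarrow> real" where
  "Jnu S x y = (let K2 = kappa2 S; M = inv_on K2 (Jkappa S) in
     (\<Sum>m\<in>K2. \<Sum>n\<in>K2. Jkappa S x m * M m n * Jkappa S y n))"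

end

theory Submission
  imports Defs
begin

text \<open>The Jacobian acts as the identity on the nuisance parameters, so the nuisance block of
  the location FIM is that of the channel FIM, which is diagonal with positive entries: no
  observation couples two different gains or offsets. Its inverse is the entrywise reciprocal,
  and the loss becomes a sum of rank-one terms, one per nuisance parameter coupled to the
  orientation. The orientation enters only through the receiver-side delays, and a delay is
  coupled only to the time offset of its own link. Hence only delta_bU (coupling -a_b,
  information the sum of SNR_bu,k omega_bU,k) and delta_QU (coupling -a_Q) contribute.\<close>

lemma sum_if_zero: "(\<Sum>x\<in>A. if P then f x else 0) = (if P then sum f A else 0)"
  by simp

lemma sum_sum_delta_delta:
  assumes "finite E" "x \<in> E" "y \<in> E"
  shows "(\<Sum>e\<in>E. \<Sum>e'\<in>E. (if x = e then 1 else 0) * J e e' * (if y = e' then 1 else 0)) = (J x y :: real)"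
proof -
  have "\<And>e e'. (if x = e then 1 else 0) * J e e' * (if y = e' then 1 else 0)
      = (if e = x then if e' = y then J x y else 0 else 0)"
    by auto
  moreover have "\<And>e. (\<Sum>e'\<in>E. if e = x then if e' = y then J x y else 0 else 0)
      = (if e = x then J x y else 0)"
    using assms by simp
  ultimately show ?thesis using assms by simp
qed

lemma sum_sum_delta_right:
  assumes "finite E" "y \<in> E"
  shows "(\<Sum>e\<in>E. \<Sum>e'\<in>E. a e * J e e' * (if y = e' then 1 else 0)) = (\<Sum>e\<in>E. a e * J e y :: real)"
  using assms by (simp add: if_distrib sum.delta cong: if_cong)

lemma sum_delta_nested3:
  fixes c :: "nat \<Rightarrow> nat \<Rightarrow> nat \<Rightarrow> real"
  assumes "finite E" "\<And>b u k. b < B \<Longrightarrow> u < U \<Longrightarrow> k < K \<Longrightarrow> T b u k \<in> E"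
  shows "(\<Sum>e\<in>E. \<Sum>b<B. \<Sum>u<U. \<Sum>k<K. if e = T b u k then c b u k else 0)
       = (\<Sum>b<B. \<Sum>u<U. \<Sum>k<K. c b u k)"
proof -
  have "(\<Sum>e\<in>E. \<Sum>b<B. \<Sum>u<U. \<Sum>k<K. if e = T b u k then c b u k else 0)
      = (\<Sum>b<B. \<Sum>u<U. \<Sum>k<K. \<Sum>e\<in>E. if e = T b u k then c b u k else 0)"
    by (subst sum.swap) (simp add: sum.swap[of _ E])
  also have "\<dots> = (\<Sum>b<B. \<Sum>u<U. \<Sum>k<K. c b u k)"
    using assms by simp
  finally show ?thesis .
qed

lemma sum_pos_nested3:
  fixes f :: "nat \<Rightarrow> nat \<Rightarrow> nat \<Rightarrow> real"
  assumes "\<And>a b c. a < A \<Longrightarrow> b < B \<Longrightarrow> c < C \<Longrightarrow> f a b c \<ge> 0"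
    and "a0 < A" "b0 < B" "c0 < C" "f a0 b0 c0 > 0"
  shows "(\<Sum>a<A. \<Sum>b<B. \<Sum>c<C. f a b c) > 0"
  using assms by (intro sum_pos2[of _ a0] sum_pos2[of _ b0] sum_pos2[of _ c0] sum_nonneg) auto

lemma inv_on_diagonal:
  assumes "finite I"
    and off_diag: "\<And>i j. i \<in> I \<Longrightarrow> j \<in> I \<Longrightarrow> i \<noteq> j \<Longrightarrow> A i j = 0"
    and diag: "\<And>i. i \<in> I \<Longrightarrow> A i i \<noteq> 0"
  shows "inv_on I A = (\<lambda>i j. if i \<in> I \<and> i = j then 1 / A i i else 0)"
  unfolding inv_on_def
proof (rule the_equality)
  have row: "(\<Sum>l\<in>I. A i l * f l) = A i i * f i" if "i \<in> I" for i f
  proof -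
    have "(\<Sum>l\<in>I. A i l * f l) = (\<Sum>l\<in>I. if i = l then A i i * f i else 0)"
      by (rule sum.cong) (use off_diag that in auto)
    then show ?thesis using \<open>finite I\<close> that by simp
  qed
  have col: "(\<Sum>l\<in>I. f l * A l j) = f j * A j j" if "j \<in> I" for j f
  proof -
    have "(\<Sum>l\<in>I. f l * A l j) = (\<Sum>l\<in>I. if j = l then f j * A j j else 0)"
      by (rule sum.cong) (use off_diag that in auto)
    then show ?thesis using \<open>finite I\<close> that by simp
  qed
  show "(\<forall>i\<in>I. \<forall>j\<in>I. (\<Sum>l\<in>I. A i l * (if l \<in> I \<and> l = j then 1 / A l l else 0))
          = (if i = j then 1 else 0)) \<and>
        (\<forall>i\<in>I. \<forall>j\<in>I. (\<Sum>l\<in>I. (if i \<in> I \<and> i = l then 1 / A i i else 0) * A l j)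
          = (if i = j then 1 else 0)) \<and>
        (\<forall>i j. i \<notin> I \<or> j \<notin> I \<longrightarrow> (if i \<in> I \<and> i = j then 1 / A i i else 0) = 0)"
    by (auto simp: row col diag)
  fix M
  assume M: "(\<forall>i\<in>I. \<forall>j\<in>I. (\<Sum>l\<in>I. A i l * M l j) = (if i = j then 1 else 0)) \<and>
      (\<forall>i\<in>I. \<forall>j\<in>I. (\<Sum>l\<in>I. M i l * A l j) = (if i = j then 1 else 0)) \<and>
      (\<forall>i j. i \<notin> I \<or> j \<notin> I \<longrightarrow> M i j = 0)"
  show "M = (\<lambda>i j. if i \<in> I \<and> i = j then 1 / A i i else 0)"
  proof (intro ext)
    fix i j
    show "M i j = (if i \<in> I \<and> i = j then 1 / A i i else 0)"
    proof (cases "i \<in> I \<and> j \<in> I")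
      case True
      then have "A i i * M i j = (if i = j then 1 else 0)"
        using M row[of i "\<lambda>l. M l j"] by auto
      then show ?thesis using True diag[of i] by (auto simp: field_simps)
    qed (use M in auto)
  qed
qed

lemma bilinear_inv_on_diagonal:
  assumes "finite I"
    and "\<And>i j. i \<in> I \<Longrightarrow> j \<in> I \<Longrightarrow> i \<noteq> j \<Longrightarrow> A i j = 0"
    and "\<And>i. i \<in> I \<Longrightarrow> A i i \<noteq> 0"
  shows "(\<Sum>m\<in>I. \<Sum>n\<in>I. x m * inv_on I A m n * y n) = (\<Sum>m\<in>I. x m * y m / A m m)"
proof -
  have "(\<Sum>n\<in>I. x m * (if m \<in> I \<and> m = n then 1 / A m m else 0) * y n) = x m * y m / A m m"
    if "m \<in> I" for m
  proof -
    have "\<And>n. x m * (if m \<in> I \<and> m = n then 1 / A m m else 0) * y n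
        = (if m = n then x m * y m / A m m else 0)"
      using that by auto
    then show ?thesis using that \<open>finite I\<close> by (simp add: sum.delta)
  qed
  then show ?thesis
    by (simp add: inv_on_diagonal[OF assms])
qed

definition is_nuisance :: "par \<Rightarrow> bool" where
  "is_nuisance p = (case p of GbU _ _ _ \<Rightarrow> True | GqU _ _ _ \<Rightarrow> True | Gbq _ _ _ \<Rightarrow> True
     | DbU _ \<Rightarrow> True | EbU _ \<Rightarrow> True | DQU \<Rightarrow> True | EQU \<Rightarrow> True | DbQ _ \<Rightarrow> True | EbQ _ \<Rightarrow> True
     | _ \<Rightarrow> False)"

lemma is_nuisance_kappa2: "x \<in> kappa2 S \<Longrightarrow> is_nuisance x"
  by (auto simp: kappa2_def gain_set_def offset_set_def is_nuisance_def)

lemma is_nuisance_not_delay_Doppler [simp]: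
  "is_nuisance x \<Longrightarrow> x \<noteq> TbU b u k" "is_nuisance x \<Longrightarrow> x \<noteq> TqU q u k"
  "is_nuisance x \<Longrightarrow> x \<noteq> Tbq b q k" "is_nuisance x \<Longrightarrow> x \<noteq> NbU b k"
  "is_nuisance x \<Longrightarrow> x \<noteq> NqU q k" "is_nuisance x \<Longrightarrow> x \<noteq> Nbq b q k"
  by (auto simp: is_nuisance_def)

lemma finite_gain_set: "finite (gain_set S)"
proof -
  have "gain_set S \<subseteq> (\<lambda>(b, u, k). GbU b u k) ` ({..<NB S} \<times> {..<NU S} \<times> {..<NK S})
     \<union> (\<lambda>(q, u, k). GqU q u k) ` ({..<NQ S} \<times> {..<NU S} \<times> {..<NK S})
     \<union> (\<lambda>(b, q, k). Gbq b q k) ` ({..<NB S} \<times> {..<NQ S} \<times> {..<NK S})"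
    by (auto simp: gain_set_def image_iff)
  then show ?thesis by (rule finite_subset) auto
qed

lemma finite_offset_set: "finite (offset_set S)"
proof -
  have "offset_set S \<subseteq> DbU ` {..<NB S} \<union> EbU ` {..<NB S} \<union> {DQU, EQU}
      \<union> DbQ ` {..<NB S} \<union> EbQ ` {..<NB S}"
    by (auto simp: offset_set_def)
  then show ?thesis by (rule finite_subset) auto
qed

lemma finite_kappa2: "finite (kappa2 S)"
  by (simp add: kappa2_def finite_gain_set finite_offset_set)

lemma kappa2_subset_eta: "kappa2 S \<subseteq> eta S"
  by (auto simp: kappa2_def eta_def)

lemma finite_eta: "finite (eta S)"
proof -
  have "eta S \<subseteq> (\<lambda>(b, u, k). TbU b u k) ` ({..<NB S} \<times> {..<NU S} \<times> {..<NK S})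
     \<union> (\<lambda>(b, k). NbU b k) ` ({..<NB S} \<times> {..<NK S})
     \<union> (\<lambda>(q, u, k). TqU q u k) ` ({..<NQ S} \<times> {..<NU S} \<times> {..<NK S})
     \<union> (\<lambda>(q, k). NqU q k) ` ({..<NQ S} \<times> {..<NK S})
     \<union> (\<lambda>(b, q, k). Tbq b q k) ` ({..<NB S} \<times> {..<NQ S} \<times> {..<NK S})
     \<union> (\<lambda>(b, q, k). Nbq b q k) ` ({..<NB S} \<times> {..<NQ S} \<times> {..<NK S})
     \<union> gain_set S \<union> offset_set S"
    by (auto simp: eta_def image_iff)
  then show ?thesis by (rule finite_subset) (auto simp: finite_gain_set finite_offset_set)
qed

lemma Ups_nuisance: "is_nuisance x \<Longrightarrow> Ups S x e = (if x = e then 1 else 0)"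
  by (cases x) (auto simp: is_nuisance_def Ups_def)

lemma Jkappa_nuisance:
  assumes "x \<in> kappa2 S" "y \<in> kappa2 S"
  shows "Jkappa S x y = Jeta S x y"
proof -
  have "x \<in> eta S" "y \<in> eta S" using assms kappa2_subset_eta by auto
  then show ?thesis
    unfolding Jkappa_def
    using is_nuisance_kappa2[OF assms(1)] is_nuisance_kappa2[OF assms(2)]
    by (simp only: Ups_nuisance sum_sum_delta_delta finite_eta)
qed

lemma obs_nuisance:
  "x \<noteq> t \<Longrightarrow> x \<noteq> n \<Longrightarrow> y \<noteq> t \<Longrightarrow> y \<noteq> n \<Longrightarrow>
   obs t n d e g snr om ao gt f x y =
     (if x = d \<and> y = d then snr * om else if x = e \<and> y = e then snr * ao\<^sup>2 / 2
      else if x = g \<and> y = g then gt else 0)"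
  by (auto simp: obs_def)

lemma obs_nuisance_diag_nonneg:
  "x \<noteq> t \<Longrightarrow> x \<noteq> n \<Longrightarrow> snr > 0 \<Longrightarrow> om > 0 \<Longrightarrow> gt > 0 \<Longrightarrow>
   obs t n d e g snr om ao gt f x x \<ge> 0"
  by (simp add: obs_nuisance)

lemma obs_nuisance_diag_pos:
  "x \<noteq> t \<Longrightarrow> x \<noteq> n \<Longrightarrow> x \<in> {d, e, g} \<Longrightarrow> snr > 0 \<Longrightarrow> om > 0 \<Longrightarrow> ao > 0 \<Longrightarrow> gt > 0 \<Longrightarrow>
   obs t n d e g snr om ao gt f x x > 0"
  by (auto simp: obs_nuisance)

lemma Jeta_nuisance_off_diag:
  assumes "is_nuisance x" "is_nuisance y" "x \<noteq> y"
  shows "Jeta S x y = 0"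
proof -
  have "obs t n d e g snr om ao gt f x y = 0"
    if "x \<noteq> t" "x \<noteq> n" "y \<noteq> t" "y \<noteq> n" for t n d e g snr om ao gt f
    using that \<open>x \<noteq> y\<close> by (auto simp: obs_def)
  then show ?thesis using assms by (simp add: Jeta_def)
qed

lemma Jeta_nuisance_diag_pos:
  fixes S :: sysdata
  assumes x: "x \<in> kappa2 S"
    and "NB S \<ge> 1" "NQ S \<ge> 1" "NU S \<ge> 1" "NK S \<ge> 1"
    and "\<And>b u k. snr_bu S b u k > 0" "\<And>q u k. snr_qu S q u k > 0" "\<And>b q k. snr_bq S b q k > 0"
    and "\<And>b k. omega_bU S b k > 0" "\<And>q k. omega_qU S q k > 0" "\<And>b q k. omega_bq S b q k > 0"
    and "\<And>b u k. ao_bu S b u k > 0" "\<And>q u k. ao_qu S q u k > 0" "\<And>b q k. ao_bq S b q k > 0"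
    and "\<And>b u k. gt_bu S b u k > 0" "\<And>q u k. gt_qu S q u k > 0" "\<And>b q k. gt_bq S b q k > 0"
  shows "Jeta S x x > 0"
proof -
  have "is_nuisance x" using x by (rule is_nuisance_kappa2)
  define f1 where "f1 b u k = obs (TbU b u k) (NbU b k) (DbU b) (EbU b) (GbU b u k)
      (snr_bu S b u k) (omega_bU S b k) (ao_bu S b u k) (gt_bu S b u k) (fc S) x x" for b u k
  define f2 where "f2 q u k = obs (TqU q u k) (NqU q k) DQU EQU (GqU q u k)
      (snr_qu S q u k) (omega_qU S q k) (ao_qu S q u k) (gt_qu S q u k) (fc S) x x" for q u k
  define f3 where "f3 b q k = obs (Tbq b q k) (Nbq b q k) (DbQ b) (EbQ b) (Gbq b q k)
      (snr_bq S b q k) (omega_bq S b q k) (ao_bq S b q k) (gt_bq S b q k) (fc S) x x" for b q k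
  let ?T1 = "\<Sum>b<NB S. \<Sum>u<NU S. \<Sum>k<NK S. f1 b u k"
  let ?T2 = "\<Sum>q<NQ S. \<Sum>u<NU S. \<Sum>k<NK S. f2 q u k"
  let ?T3 = "\<Sum>b<NB S. \<Sum>q<NQ S. \<Sum>k<NK S. f3 b q k"
  have nonneg: "f1 b u k \<ge> 0" "f2 q u k \<ge> 0" "f3 b q k \<ge> 0" for b q u k
    unfolding f1_def f2_def f3_def
    using \<open>is_nuisance x\<close> assms by (simp_all add: obs_nuisance_diag_nonneg)
  have pos1: "f1 b u k > 0" if "x \<in> {DbU b, EbU b, GbU b u k}" for b u k
    unfolding f1_def using \<open>is_nuisance x\<close> assms that by (simp add: obs_nuisance_diag_pos)
  have pos2: "f2 q u k > 0" if "x \<in> {DQU, EQU, GqU q u k}" for q u k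
    unfolding f2_def using \<open>is_nuisance x\<close> assms that by (simp add: obs_nuisance_diag_pos)
  have pos3: "f3 b q k > 0" if "x \<in> {DbQ b, EbQ b, Gbq b q k}" for b q k
    unfolding f3_def using \<open>is_nuisance x\<close> assms that by (simp add: obs_nuisance_diag_pos)
  have "?T1 > 0 \<or> ?T2 > 0 \<or> ?T3 > 0"
    using x assms(2-5) unfolding kappa2_def gain_set_def offset_set_def
    by (elim UnE CollectE exE conjE insertE emptyE)
      (force intro: sum_pos_nested3 nonneg pos1 pos2 pos3)+
  moreover have "?T1 \<ge> 0" "?T2 \<ge> 0" "?T3 \<ge> 0"
    by (simp_all add: sum_nonneg nonneg)
  ultimately show ?thesis
    unfolding Jeta_def f1_def[symmetric] f2_def[symmetric] f3_def[symmetric] by linarith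
qed

lemma Jeta_DbU_diag:
  "b < NB S \<Longrightarrow> Jeta S (DbU b) (DbU b) = (\<Sum>u<NU S. \<Sum>k<NK S. snr_bu S b u k * omega_bU S b k)"
  by (simp add: Jeta_def obs_nuisance cong: if_cong) (simp add: sum_if_zero)

lemma Jeta_DQU_diag:
  "Jeta S DQU DQU = (\<Sum>q<NQ S. \<Sum>u<NU S. \<Sum>k<NK S. snr_qu S q u k * omega_qU S q k)"
  by (simp add: Jeta_def obs_nuisance)

definition a_leo :: "sysdata \<Rightarrow> nat \<Rightarrow> real^3" where
  "a_leo S b = (\<Sum>k<NK S. \<Sum>u<NU S. (snr_bu S b u k * omega_bU S b k) *\<^sub>R gradPhi_tau_bu S b u k)"

definition a_bs :: "sysdata \<Rightarrow> real^3" where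
  "a_bs S = (\<Sum>q<NQ S. \<Sum>k<NK S. \<Sum>u<NU S. (snr_qu S q u k * omega_qU S q k) *\<^sub>R gradPhi_tau_qu S q u k)"

lemma a_leo_component:
  "a_leo S b $ i = (\<Sum>u<NU S. \<Sum>k<NK S. gradPhi_tau_bu S b u k $ i * (snr_bu S b u k * omega_bU S b k))"
  unfolding a_leo_def by (simp add: sum.swap[of _ "{..<NK S}"] mult.commute)

lemma a_bs_component:
  "a_bs S $ i = (\<Sum>q<NQ S. \<Sum>u<NU S. \<Sum>k<NK S. gradPhi_tau_qu S q u k $ i * (snr_qu S q u k * omega_qU S q k))"
  unfolding a_bs_def by (simp add: sum.swap[of _ "{..<NK S}"] mult.commute)

lemma Ups_PhiU_mult_obs_bU:
  "is_nuisance m \<Longrightarrow>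
   Ups S (PhiU i) e * obs (TbU b u k) (NbU b k) (DbU b) (EbU b) (GbU b u k) snr om ao gt f e m =
     (if e = TbU b u k then if m = DbU b then - (gradPhi_tau_bu S b u k $ i * (snr * om)) else 0
      else 0)"
  by (cases e) (auto simp: Ups_def obs_def)

lemma Ups_PhiU_mult_obs_qU:
  "is_nuisance m \<Longrightarrow>
   Ups S (PhiU i) e * obs (TqU q u k) (NqU q k) DQU EQU (GqU q u k) snr om ao gt f e m =
     (if e = TqU q u k then if m = DQU then - (gradPhi_tau_qu S q u k $ i * (snr * om)) else 0
      else 0)"
  by (cases e) (auto simp: Ups_def obs_def)

lemma Ups_PhiU_mult_obs_bq:
  "is_nuisance m \<Longrightarrow>
   Ups S (PhiU i) e * obs (Tbq b q k) (Nbq b q k) (DbQ b) (EbQ b) (Gbq b q k) snr om ao gt f e m = 0"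
  by (cases e) (auto simp: Ups_def obs_def)

lemma Jkappa_PhiU_nuisance:
  assumes m: "m \<in> kappa2 S"
  shows "Jkappa S (PhiU i) m =
    (\<Sum>b<NB S. if m = DbU b then - (a_leo S b $ i) else 0) + (if m = DQU then - (a_bs S $ i) else 0)"
proof -
  have "is_nuisance m" using m by (rule is_nuisance_kappa2)
  have "m \<in> eta S" using m kappa2_subset_eta by auto
  let ?c1 = "\<lambda>b u k. if m = DbU b then - (gradPhi_tau_bu S b u k $ i * (snr_bu S b u k * omega_bU S b k)) else 0"
  let ?c2 = "\<lambda>q u k. if m = DQU then - (gradPhi_tau_qu S q u k $ i * (snr_qu S q u k * omega_qU S q k)) else 0"
  have "Jkappa S (PhiU i) m = (\<Sum>e\<in>eta S. Ups S (PhiU i) e * Jeta S e m)"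
    unfolding Jkappa_def using \<open>m \<in> eta S\<close>
    by (simp only: Ups_nuisance[OF \<open>is_nuisance m\<close>] sum_sum_delta_right finite_eta)
  also have "\<dots> = (\<Sum>e\<in>eta S. (\<Sum>b<NB S. \<Sum>u<NU S. \<Sum>k<NK S. if e = TbU b u k then ?c1 b u k else 0)
      + (\<Sum>q<NQ S. \<Sum>u<NU S. \<Sum>k<NK S. if e = TqU q u k then ?c2 q u k else 0))"
    unfolding Jeta_def using \<open>is_nuisance m\<close>
    by (simp only: distrib_left sum_distrib_left Ups_PhiU_mult_obs_bU Ups_PhiU_mult_obs_qU
        Ups_PhiU_mult_obs_bq sum.neutral_const add_0_right)
  also have "\<dots> = (\<Sum>b<NB S. \<Sum>u<NU S. \<Sum>k<NK S. ?c1 b u k) + (\<Sum>q<NQ S. \<Sum>u<NU S. \<Sum>k<NK S. ?c2 q u k)"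
    by (simp only: sum.distrib, intro arg_cong2[where f = "(+)"] sum_delta_nested3 finite_eta)
      (force simp: eta_def)+
  also have "\<dots> = (\<Sum>b<NB S. if m = DbU b then - (a_leo S b $ i) else 0) + (if m = DQU then - (a_bs S $ i) else 0)"
    by (simp only: a_leo_component a_bs_component sum_if_zero sum_negf)
  finally show ?thesis .
qed

lemma Jnu_PhiU:
  assumes diag: "\<And>m. m \<in> kappa2 S \<Longrightarrow> Jeta S m m \<noteq> 0"
  shows "Jnu S (PhiU i) (PhiU j) =
    (\<Sum>b<NB S. a_leo S b $ i * a_leo S b $ j / Jeta S (DbU b) (DbU b))
    + a_bs S $ i * a_bs S $ j / Jeta S DQU DQU"
proof -
  let ?K = "kappa2 S"
  let ?F = "\<lambda>i m. Jkappa S (PhiU i) m"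
  let ?g = "\<lambda>m. ?F i m * ?F j m / Jeta S m m"
  let ?W = "DbU ` {..<NB S} \<union> {DQU}"
  have "?W \<subseteq> ?K" by (auto simp: kappa2_def offset_set_def)
  have F_DbU: "?F l (DbU b) = - (a_leo S b $ l)" if "b < NB S" for l b
    using that \<open>?W \<subseteq> ?K\<close> by (auto simp: Jkappa_PhiU_nuisance if_distrib cong: if_cong)
  have F_DQU: "?F l DQU = - (a_bs S $ l)" for l
    using \<open>?W \<subseteq> ?K\<close> by (auto simp: Jkappa_PhiU_nuisance)
  have F_other: "?F l m = 0" if "m \<in> ?K - ?W" for l m
    using that by (auto simp: Jkappa_PhiU_nuisance intro!: sum.neutral)
  have "Jnu S (PhiU i) (PhiU j) = (\<Sum>m\<in>?K. ?F i m * ?F j m / Jkappa S m m)"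
    unfolding Jnu_def Let_def
    using diag by (intro bilinear_inv_on_diagonal finite_kappa2)
      (simp_all add: Jkappa_nuisance Jeta_nuisance_off_diag is_nuisance_kappa2)
  also have "\<dots> = sum ?g ?K"
    by (intro sum.cong refl) (simp add: Jkappa_nuisance)
  also have "\<dots> = sum ?g ?W"
    using \<open>?W \<subseteq> ?K\<close> F_other by (intro sum.mono_neutral_right finite_kappa2) auto
  also have "\<dots> = (\<Sum>b<NB S. ?g (DbU b)) + ?g DQU"
    by (simp add: sum.reindex inj_on_def image_iff add.commute)
  finally show ?thesis by (simp add: F_DbU F_DQU)
qed

theorem lemma25:
  fixes S :: sysdata
  assumes "NB S \<ge> 1" "NQ S \<ge> 1" "NU S \<ge> 1" "NK S \<ge> 1"
    and "cl S > 0"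
    and "\<And>b u k. snr_bu S b u k > 0" "\<And>q u k. snr_qu S q u k > 0" "\<And>b q k. snr_bq S b q k > 0"
    and "\<And>b k. omega_bU S b k > 0" "\<And>q k. omega_qU S q k > 0" "\<And>b q k. omega_bq S b q k > 0"
    and "\<And>b u k. ao_bu S b u k > 0" "\<And>q u k. ao_qu S q u k > 0" "\<And>b q k. ao_bq S b q k > 0"
    and "\<And>b u k. gt_bu S b u k > 0" "\<And>q u k. gt_qu S q u k > 0" "\<And>b q k. gt_bq S b q k > 0"
  shows "\<forall>i j :: 3.
     Jnu S (PhiU i) (PhiU j) =
       (\<Sum>b<NB S.
          (let a_b = (\<Sum>k<NK S. \<Sum>u<NU S. (snr_bu S b u k * omega_bU S b k) *\<^sub>R gradPhi_tau_bu S b u k)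
           in a_b $ i * a_b $ j / (\<Sum>u<NU S. \<Sum>k<NK S. snr_bu S b u k * omega_bU S b k)))
     + (let a_Q = (\<Sum>q<NQ S. \<Sum>k<NK S. \<Sum>u<NU S. (snr_qu S q u k * omega_qU S q k) *\<^sub>R gradPhi_tau_qu S q u k)
        in a_Q $ i * a_Q $ j / (\<Sum>q<NQ S. \<Sum>u<NU S. \<Sum>k<NK S. snr_qu S q u k * omega_qU S q k))"
proof -
  have "Jeta S m m \<noteq> 0" if "m \<in> kappa2 S" for m
    using Jeta_nuisance_diag_pos[OF that assms(1-4) assms(6-17)] by simp
  then have "Jnu S (PhiU i) (PhiU j) =
      (\<Sum>b<NB S. a_leo S b $ i * a_leo S b $ j / Jeta S (DbU b) (DbU b))
      + a_bs S $ i * a_bs S $ j / Jeta S DQU DQU" for i j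
    by (rule Jnu_PhiU)
  then show ?thesis
    unfolding Let_def a_leo_def[symmetric] a_bs_def[symmetric]
    by (simp add: Jeta_DbU_diag Jeta_DQU_diag)
qed

end
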